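(* Let $Q\in\mathbb{C}^\times$ and let $\alpha_0,\alpha_1,\alpha_2$ be nonzero complex parameters with $\alpha_0\alpha_1\alpha_2=Q$; indices of $\alpha_i,\tau_i,\overline{\tau}_i,T_i$ are read modulo $3$ (so index $3$ means index $0$). Let $\tau_i,\overline{\tau}_i$ ($i\in\mathbb{Z}/3\mathbb{Z}$) be functions of the parameters, and let the translations $T_1,T_2,T_3$ act on the parameters by $T_1:(\alpha_0,\alpha_1,\alpha_2)\mapsto(Q\alpha_0,Q^{-1}\alpha_1,\alpha_2)$, $T_2:(\alpha_0,\alpha_1,\alpha_2)\mapsto(\alpha_0,Q\alpha_1,Q^{-1}\alpha_2)$, $T_3:(\alpha_0,\alpha_1,\alpha_2)\mapsto(Q^{-1}\alpha_0,\alpha_1,Q\alpha_2)$, and on functions $F$ of the parameters by $T_j(F)(\alpha)=F(T_j(\alpha))$. Suppose that for each $i=1,2,3$ the following identities hold: \[T_i(\tau_{i-1})=\tau_i,\qquad T_i(\overline{\tau}_{i-1})=\overline{\tau}_i,\] \[T_i(\tau_{i+1})=\frac{\alpha_{i-1}^6\tau_i\overline{\tau}_{i+1}+Q^2\overline{\tau}_i\tau_{i+1}}{Q\alpha_{i-1}^3\overline{\tau}_{i-1}},\qquad T_i(\overline{\tau}_{i+1})=\frac{Q^2\alpha_{i-1}^6\tau_{i+1}\overline{\tau}_i+\overline{\tau}_{i+1}\tau_i}{Q\alpha_{i-1}^3\tau_{i-1}}.\] Then for each $i=1,2,3$ the following identities also hold: \[T_i(\tau_i)=\frac{1}{\alpha_{i+1}^3\alpha_{i-1}^6}\frac{\tau_i^2}{\tau_{i-1}}+\frac{\alpha_{i+1}\alpha_{i-1}^4}{\alpha_i^2}\frac{\tau_i\overline{\tau}_i}{\overline{\tau}_{i-1}}+\frac{\alpha_i^2\alpha_{i-1}^2}{\alpha_{i+1}}\frac{\overline{\tau}_i\tau_i\tau_{i+1}}{\overline{\tau}_{i+1}\tau_{i-1}}+\alpha_{i+1}^3\frac{\overline{\tau}_i^2\tau_{i+1}}{\overline{\tau}_{i+1}\overline{\tau}_{i-1}},\]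 \[T_i(\overline{\tau}_i)=\frac{1}{\alpha_{i+1}^3\alpha_{i-1}^6}\frac{\overline{\tau}_i^2}{\overline{\tau}_{i-1}}+\alpha_i^2\alpha_{i+1}^5\alpha_{i-1}^8\frac{\tau_i\overline{\tau}_i}{\tau_{i-1}}+\frac{1}{\alpha_i^2\alpha_{i+1}^5\alpha_{i-1}^2}\frac{\tau_i\overline{\tau}_i\overline{\tau}_{i+1}}{\tau_{i+1}\overline{\tau}_{i-1}}+\alpha_{i+1}^3\frac{\tau_i^2\overline{\tau}_{i+1}}{\tau_{i+1}\tau_{i-1}}.\]
   Context: This arises in the $\tau$-function formulation of the $q$-Painlevé III equation with affine Weyl group symmetry of type $(A_2+A_1)^{(1)}$: $q=Q^6$, $a_i=\alpha_i^6$ with $a_0a_1a_2=q$, and the translations are $T_1=\pi s_2s_1$, $T_2=s_1\pi s_2$, $T_3=s_2s_1\pi$, which commute and satisfy $T_1T_2T_3=1$. The identities are understood as identities of functions of the parameters (coefficients are evaluated at the unshifted parameters). *)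

theory Defs
  imports Complex_Main
begin

type_synonym param = "complex \<times> complex \<times> complex"

definition alpha :: "param \<Rightarrow> nat \<Rightarrow> complex" where
  "alpha p k = (case p of (a0, a1, a2) \<Rightarrow>
      (if k mod 3 = 0 then a0 else if k mod 3 = 1 then a1 else a2))"

definition PD :: "complex \<Rightarrow> param set" where
  "PD Q = {(a0, a1, a2). a0 \<noteq> 0 \<and> a1 \<noteq> 0 \<and> a2 \<noteq> 0 \<and> a0 * a1 * a2 = Q}"

definition Tr :: "complex \<Rightarrow> nat \<Rightarrow> param \<Rightarrow> param" where
  "Tr Q j p = (case p of (a0, a1, a2) \<Rightarrow>
      (if j mod 3 = 1 then (Q * a0, a1 / Q, a2)
       else if j mod 3 = 2 then (a0, Q * a1, a2 / Q)
       else (a0 / Q, a1, Q * a2)))"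

end

theory Submission
  imports Defs
begin

text \<open>
  Put x = T_i p and y = T_{i+1} x; since T_1 T_2 T_3 = 1, also T_{i+2} y = p. The hypotheses
  for T_{i+2} at y identify \<tau>_{i+1}(p) and its bar with \<tau>_{i-1}(y) and its bar, which the
  bilinear relations for T_{i+1} at x express through values at x. In these two relations the
  unknowns T_i \<tau>_i = \<tau>_i(x) and its bar occur only as denominators, so each can be solved for;
  substituting the hypotheses for T_i at p and using \<alpha>_0 \<alpha>_1 \<alpha>_2 = Q gives the four-term formulas.
\<close>

lemma alpha_cong_mod3: "k mod 3 = l mod 3 \<Longrightarrow> alpha p k = alpha p l"
  unfolding alpha_def by (simp only:)

lemma Tr_cong_mod3: "j mod 3 = k mod 3 \<Longrightarrow> Tr Q j = Tr Q k"
  unfolding Tr_def by (simp only:)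

lemma mod3_cases:
  fixes i :: nat
  obtains "i mod 3 = 0" "(i + 1) mod 3 = 1" "(i + 2) mod 3 = 2"
        | "i mod 3 = 1" "(i + 1) mod 3 = 2" "(i + 2) mod 3 = 0"
        | "i mod 3 = 2" "(i + 1) mod 3 = 0" "(i + 2) mod 3 = 1"
proof -
  consider "i mod 3 = 0" | "i mod 3 = 1" | "i mod 3 = 2" by linarith
  then show thesis by cases (rule that; presburger)+
qed

lemma alpha_nonzero: "p \<in> PD Q \<Longrightarrow> alpha p k \<noteq> 0"
  by (auto simp: PD_def alpha_def split: if_split_asm)

lemma alpha_prod: "p \<in> PD Q \<Longrightarrow> alpha p i * alpha p (i + 1) * alpha p (i + 2) = Q"
  by (cases i rule: mod3_cases) (auto simp: PD_def alpha_def mult_ac)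

lemma Tr_PD: "Q \<noteq> 0 \<Longrightarrow> p \<in> PD Q \<Longrightarrow> Tr Q j p \<in> PD Q"
  by (cases p) (auto simp: PD_def Tr_def)

lemma alpha_Tr_self: "alpha (Tr Q i p) i = alpha p i / Q"
  by (cases p) (auto simp: alpha_def Tr_def)

lemma Tr_cycle: "Q \<noteq> 0 \<Longrightarrow> Tr Q (i + 2) (Tr Q (i + 1) (Tr Q i p)) = p"
  by (cases p, cases i rule: mod3_cases) (auto simp: Tr_def)

lemma mod3_representative:
  fixes i :: nat
  obtains j where "j \<in> {1, 2, 3}" "\<And>n. (j + n) mod 3 = (i + n) mod 3"
proof
  let ?j = "if i mod 3 = 0 then 3 else i mod 3"
  show "?j \<in> {1, 2, 3}" by auto
  have "?j mod 3 = i mod 3" by auto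
  then show "(?j + n) mod 3 = (i + n) mod 3" for n by (metis mod_add_left_eq)
qed

text \<open>
  Here a, b, c stand for \<alpha>_i, \<alpha>_{i+1}, \<alpha>_{i-1}; t_k, tb_k for \<tau>_{i+k} and its bar at p;
  y_k, yb_k for the same at T_i p. The hypotheses t1 and tb1 are the relations for T_{i+1} at
  T_i p, where \<alpha>_i has become a/Q.
\<close>

lemma tau_translation_algebra:
  fixes Q a b c t0 t1 t2 tb0 tb1 tb2 y0 y1 yb0 yb1 :: complex
  assumes Q: "a * b * c = Q"
    and nonzero: "a \<noteq> 0" "b \<noteq> 0" "c \<noteq> 0" "t0 \<noteq> 0" "t1 \<noteq> 0" "t2 \<noteq> 0"
      "tb0 \<noteq> 0" "tb1 \<noteq> 0" "tb2 \<noteq> 0" "y0 \<noteq> 0" "yb0 \<noteq> 0"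
    and y1: "y1 = (c^6 * t0 * tb1 + Q^2 * tb0 * t1) / (Q * c^3 * tb2)"
    and yb1: "yb1 = (Q^2 * c^6 * t1 * tb0 + tb1 * t0) / (Q * c^3 * t2)"
    and t1: "t1 = ((a/Q)^6 * y1 * tb0 + Q^2 * yb1 * t0) / (Q * (a/Q)^3 * yb0)"
    and tb1: "tb1 = (Q^2 * (a/Q)^6 * t0 * yb1 + tb0 * y1) / (Q * (a/Q)^3 * y0)"
  shows "y0 = 1 / (b^3 * c^6) * (t0^2 / t2) + (b * c^4 / a^2) * (t0 * tb0 / tb2)
           + (a^2 * c^2 / b) * (tb0 * t0 * t1 / (tb1 * t2)) + b^3 * (tb0^2 * t1 / (tb1 * tb2))
     \<and> yb0 = 1 / (b^3 * c^6) * (tb0^2 / tb2) + a^2 * b^5 * c^8 * (t0 * tb0 / t2)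
           + 1 / (a^2 * b^5 * c^2) * (t0 * tb0 * tb1 / (t1 * tb2)) + b^3 * (t0^2 * tb1 / (t1 * t2))"
proof -
  have Q_nonzero: "Q \<noteq> 0" using nonzero Q by auto
  have aQ_cube: "Q * (a/Q)^3 = a / (b^2 * c^2)" and aQ_sixth: "(a/Q)^6 = 1 / (b^6 * c^6)"
    unfolding Q[symmetric] using nonzero by (simp_all add: field_simps eval_nat_numeral)
  have "y0 = (Q^2 * (a/Q)^6 * t0 * yb1 + tb0 * y1) / (Q * (a/Q)^3 * tb1)"
    using tb1 nonzero Q_nonzero by (simp add: field_simps)
  also have "\<dots> = (t0 * (a / (b^2 * c^2) * yb1) + tb0 * (b^2 * c^2 / a * y1)) / tb1"
    unfolding aQ_cube aQ_sixth Q[symmetric] using nonzero by (simp add: field_simps eval_nat_numeral)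
  finally have y0: "y0 = (t0 * (a / (b^2 * c^2) * yb1) + tb0 * (b^2 * c^2 / a * y1)) / tb1" .
  have "yb0 = ((a/Q)^6 * y1 * tb0 + Q^2 * yb1 * t0) / (Q * (a/Q)^3 * t1)"
    using t1 nonzero Q_nonzero by (simp add: field_simps)
  also have "\<dots> = (tb0 * (y1 / (a * b^4 * c^4)) + t0 * (a * b^4 * c^4 * yb1)) / t1"
    unfolding aQ_cube aQ_sixth Q[symmetric] using nonzero by (simp add: field_simps eval_nat_numeral)
  finally have yb0: "yb0 = (tb0 * (y1 / (a * b^4 * c^4)) + t0 * (a * b^4 * c^4 * yb1)) / t1" .
  have y1_scaled: "b^2 * c^2 / a * y1 = b * c^4 / a^2 * t0 * tb1 / tb2 + b^3 * tb0 * t1 / tb2"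
    "y1 / (a * b^4 * c^4) = t0 * tb1 / (a^2 * b^5 * c^2 * tb2) + tb0 * t1 / (b^3 * c^6 * tb2)"
    unfolding y1 Q[symmetric] using nonzero by (simp_all add: field_simps eval_nat_numeral)
  have yb1_scaled: "a / (b^2 * c^2) * yb1 = a^2 * c^2 / b * t1 * tb0 / t2 + tb1 * t0 / (b^3 * c^6 * t2)"
    "a * b^4 * c^4 * yb1 = a^2 * b^5 * c^8 * t1 * tb0 / t2 + b^3 * tb1 * t0 / t2"
    unfolding yb1 Q[symmetric] using nonzero by (simp_all add: field_simps eval_nat_numeral)
  show ?thesis
    unfolding y0 yb0 y1_scaled yb1_scaled using nonzero
    by (simp add: field_simps eval_nat_numeral)
qed

theorem lemma3p2:
  fixes Q :: complex and tau taub :: "nat \<Rightarrow> param \<Rightarrow> complex"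
  assumes hQ: "Q \<noteq> 0"
    and nz: "\<And>p k. p \<in> PD Q \<Longrightarrow> k < 3 \<Longrightarrow> tau k p \<noteq> 0 \<and> taub k p \<noteq> 0"
    and h1: "\<And>i p. i \<in> {1, 2, 3} \<Longrightarrow> p \<in> PD Q \<Longrightarrow>
               tau ((i + 2) mod 3) (Tr Q i p) = tau (i mod 3) p"
    and h2: "\<And>i p. i \<in> {1, 2, 3} \<Longrightarrow> p \<in> PD Q \<Longrightarrow>
               taub ((i + 2) mod 3) (Tr Q i p) = taub (i mod 3) p"
    and h3: "\<And>i p. i \<in> {1, 2, 3} \<Longrightarrow> p \<in> PD Q \<Longrightarrow>
               tau ((i + 1) mod 3) (Tr Q i p) =
                 (alpha p (i + 2) ^ 6 * tau (i mod 3) p * taub ((i + 1) mod 3) p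
                  + Q ^ 2 * taub (i mod 3) p * tau ((i + 1) mod 3) p)
                 / (Q * alpha p (i + 2) ^ 3 * taub ((i + 2) mod 3) p)"
    and h4: "\<And>i p. i \<in> {1, 2, 3} \<Longrightarrow> p \<in> PD Q \<Longrightarrow>
               taub ((i + 1) mod 3) (Tr Q i p) =
                 (Q ^ 2 * alpha p (i + 2) ^ 6 * tau ((i + 1) mod 3) p * taub (i mod 3) p
                  + taub ((i + 1) mod 3) p * tau (i mod 3) p)
                 / (Q * alpha p (i + 2) ^ 3 * tau ((i + 2) mod 3) p)"
    and i: "i \<in> {1, 2, 3}" and p: "p \<in> PD Q"
  shows "tau (i mod 3) (Tr Q i p) =
           1 / (alpha p (i + 1) ^ 3 * alpha p (i + 2) ^ 6)
             * (tau (i mod 3) p ^ 2 / tau ((i + 2) mod 3) p)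
         + (alpha p (i + 1) * alpha p (i + 2) ^ 4 / alpha p i ^ 2)
             * (tau (i mod 3) p * taub (i mod 3) p / taub ((i + 2) mod 3) p)
         + (alpha p i ^ 2 * alpha p (i + 2) ^ 2 / alpha p (i + 1))
             * (taub (i mod 3) p * tau (i mod 3) p * tau ((i + 1) mod 3) p
                / (taub ((i + 1) mod 3) p * tau ((i + 2) mod 3) p))
         + alpha p (i + 1) ^ 3
             * (taub (i mod 3) p ^ 2 * tau ((i + 1) mod 3) p
                / (taub ((i + 1) mod 3) p * taub ((i + 2) mod 3) p))
       \<and> taub (i mod 3) (Tr Q i p) =
           1 / (alpha p (i + 1) ^ 3 * alpha p (i + 2) ^ 6)
             * (taub (i mod 3) p ^ 2 / taub ((i + 2) mod 3) p)
         + alpha p i ^ 2 * alpha p (i + 1) ^ 5 * alpha p (i + 2) ^ 8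
             * (tau (i mod 3) p * taub (i mod 3) p / tau ((i + 2) mod 3) p)
         + 1 / (alpha p i ^ 2 * alpha p (i + 1) ^ 5 * alpha p (i + 2) ^ 2)
             * (tau (i mod 3) p * taub (i mod 3) p * taub ((i + 1) mod 3) p
                / (tau ((i + 1) mod 3) p * taub ((i + 2) mod 3) p))
         + alpha p (i + 1) ^ 3
             * (tau (i mod 3) p ^ 2 * taub ((i + 1) mod 3) p
                / (tau ((i + 1) mod 3) p * tau ((i + 2) mod 3) p))"
proof -
  \<comment> \<open>The hypotheses are stated for indices 1, 2, 3 only; j1 and j2 represent i + 1 and i + 2.\<close>
  obtain j1 where j1: "j1 \<in> {1, 2, 3}" "\<And>n. (j1 + n) mod 3 = (i + 1 + n) mod 3"
    using mod3_representative[of "i + 1"] by blast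
  obtain j2 where j2: "j2 \<in> {1, 2, 3}" "\<And>n. (j2 + n) mod 3 = (i + 2 + n) mod 3"
    using mod3_representative[of "i + 2"] by blast
  have idx: "j1 mod 3 = (i + 1) mod 3" "(j1 + 1) mod 3 = (i + 2) mod 3" "(j1 + 2) mod 3 = i mod 3"
    "j2 mod 3 = (i + 2) mod 3" "(j2 + 2) mod 3 = (i + 1) mod 3"
    using j1(2)[of 0] j1(2)[of 1] j1(2)[of 2] j2(2)[of 0] j2(2)[of 2] mod_add_self2[of "i + 1" 3]
    by (simp_all add: ac_simps)
  define x where "x = Tr Q i p"
  define y where "y = Tr Q (i + 1) x"
  have x: "x \<in> PD Q" and y: "y \<in> PD Q"
    using Tr_PD hQ p by (simp_all add: x_def y_def)
  have Tr_x: "Tr Q j1 x = y" and Tr_y: "Tr Q j2 y = p"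
    using Tr_cong_mod3[OF idx(1)] Tr_cong_mod3[OF idx(4)] Tr_cycle[OF hQ]
    by (simp_all add: x_def y_def)
  have alpha_x: "alpha x (j1 + 2) = alpha p i / Q"
    using alpha_cong_mod3[OF idx(3)] alpha_Tr_self by (simp add: x_def)
  have tau_y: "tau ((i + 2) mod 3) y = tau ((i + 1) mod 3) p"
    and taub_y: "taub ((i + 2) mod 3) y = taub ((i + 1) mod 3) p"
    using h1[OF j2(1) y] h2[OF j2(1) y] by (simp_all only: Tr_y idx)
  note index_rules = Tr_x idx alpha_x h1[OF i p, folded x_def] h2[OF i p, folded x_def]
  have tau_nonzero: "tau (k mod 3) q \<noteq> 0" "taub (k mod 3) q \<noteq> 0" if "q \<in> PD Q" for k q
    using nz[OF that, of "k mod 3"] by simp_all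
  show ?thesis
    unfolding x_def[symmetric]
    by (rule tau_translation_algebra[OF alpha_prod[OF p] alpha_nonzero[OF p] alpha_nonzero[OF p]
          alpha_nonzero[OF p] tau_nonzero(1)[OF p] tau_nonzero(1)[OF p] tau_nonzero(1)[OF p]
          tau_nonzero(2)[OF p] tau_nonzero(2)[OF p] tau_nonzero(2)[OF p] tau_nonzero[OF x]
          h3[OF i p, folded x_def] h4[OF i p, folded x_def]
          h3[OF j1(1) x, unfolded index_rules tau_y] h4[OF j1(1) x, unfolded index_rules taub_y]])
qed

end
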